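(* Let $\mathbb{X}=\langle X,\le\rangle$ be a poset such that ${\downarrow}x=\{y\in X: y\le x\}$ is cofinite in $X$ for every $x\in X$. Then the root compactification of $\mathbb{X}$ is an Esakia space.
   Context: The root compactification of a poset $\mathbb{X}$ is the ordered topological space obtained by adding a new element $\bot$ below all elements of $X$ (giving the poset $X\cup\{\bot\}$) and declaring a subset $U\subseteq X\cup\{\bot\}$ open iff either $\bot\notin U$ or $U$ is cofinite. An Esakia space is a compact ordered topological space $\langle X,\tau,\le\rangle$ such that ${\downarrow}U$ is clopen for every clopen $U$, and such that whenever $x\not\le y$ there is a clopen upset containing $x$ but not $y$. *)

theory Defs
  imports "HOL-Analysis.Analysis"
begin

definition poset_on :: "'a set \<Rightarrow> ('a \<Rightarrow> 'a \<Rightarrow> bool) \<Rightarrow> bool" where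
  "poset_on X le \<longleftrightarrow>
     (\<forall>x\<in>X. le x x) \<and>
     (\<forall>x\<in>X. \<forall>y\<in>X. le x y \<and> le y x \<longrightarrow> x = y) \<and>
     (\<forall>x\<in>X. \<forall>y\<in>X. \<forall>z\<in>X. le x y \<and> le y z \<longrightarrow> le x z)"

definition down_set :: "'a set \<Rightarrow> ('a \<Rightarrow> 'a \<Rightarrow> bool) \<Rightarrow> 'a set \<Rightarrow> 'a set" where
  "down_set X le U = {x \<in> X. \<exists>u\<in>U. le x u}"

definition is_upset :: "'a set \<Rightarrow> ('a \<Rightarrow> 'a \<Rightarrow> bool) \<Rightarrow> 'a set \<Rightarrow> bool" where
  "is_upset X le U \<longleftrightarrow> U \<subseteq> X \<and> (\<forall>u\<in>U. \<forall>x\<in>X. le u x \<longrightarrow> x \<in> U)"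

definition clopenin :: "'b topology \<Rightarrow> 'b set \<Rightarrow> bool" where
  "clopenin T U \<longleftrightarrow> openin T U \<and> closedin T U"

definition esakia_space :: "'b topology \<Rightarrow> ('b \<Rightarrow> 'b \<Rightarrow> bool) \<Rightarrow> bool" where
  "esakia_space T le \<longleftrightarrow>
     poset_on (topspace T) le \<and>
     compact_space T \<and>
     (\<forall>U. clopenin T U \<longrightarrow> clopenin T (down_set (topspace T) le U)) \<and>
     (\<forall>x\<in>topspace T. \<forall>y\<in>topspace T. \<not> le x y \<longrightarrow>
        (\<exists>U. clopenin T U \<and> is_upset (topspace T) le U \<and> x \<in> U \<and> y \<notin> U))"

text \<open>The new bottom element is represented by None; elements x of X by Some x.\<close>

definition root_carrier :: "'a set \<Rightarrow> 'a option set" where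
  "root_carrier X = insert None (Some ` X)"

fun root_le :: "('a \<Rightarrow> 'a \<Rightarrow> bool) \<Rightarrow> 'a option \<Rightarrow> 'a option \<Rightarrow> bool" where
  "root_le le None _ = True"
| "root_le le (Some x) None = False"
| "root_le le (Some x) (Some y) = le x y"

definition root_open :: "'a set \<Rightarrow> 'a option set \<Rightarrow> bool" where
  "root_open X U \<longleftrightarrow> U \<subseteq> root_carrier X \<and>
     (None \<notin> U \<or> finite (root_carrier X - U))"

lemma istopology_root_open: "istopology (root_open X)"
  unfolding istopology_def
proof (intro conjI allI impI)
  fix S T assume S: "root_open X S" and T: "root_open X T"
  have "root_carrier X - S \<inter> T = (root_carrier X - S) \<union> (root_carrier X - T)" by blast
  then show "root_open X (S \<inter> T)" using S T unfolding root_open_def by auto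
next
  fix K assume K: "\<forall>U\<in>K. root_open X U"
  show "root_open X (\<Union>K)"
  proof (cases "None \<in> \<Union>K")
    case True
    then obtain U where U: "U \<in> K" "None \<in> U" by blast
    then have "finite (root_carrier X - U)" using K unfolding root_open_def by auto
    moreover have "root_carrier X - \<Union>K \<subseteq> root_carrier X - U" using U by blast
    ultimately show ?thesis using K unfolding root_open_def by (auto intro: finite_subset)
  next
    case False
    then show ?thesis using K unfolding root_open_def by auto
  qed
qed

definition root_topology :: "'a set \<Rightarrow> 'a option topology" where
  "root_topology X = topology (root_open X)"

end

theory Submission
  imports Defs
begin

text \<open>The clopen sets of the root compactification are the finite sets avoiding \<open>\<bottom>\<close> and the
  cofinite sets containing \<open>\<bottom>\<close>. Compactness holds because the member of a cover containing
  \<open>\<bottom>\<close> misses only finitely many points. A clopen set containing some \<open>x \<in> X\<close> has a down-set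
  containing \<open>\<bottom>\<close> and \<open>\<down>x\<close>, hence cofinite; a clopen set containing \<open>\<bottom>\<close> is itself cofinite.
  For the separation axiom, \<open>x \<notle> y\<close> is witnessed by the principal up-set \<open>\<up>x\<close>, which is
  finite because by antisymmetry \<open>\<up>x - {x}\<close> lies in the finite complement of \<open>\<down>x\<close>.\<close>

lemma openin_root_topology: "openin (root_topology X) = root_open X"
  unfolding root_topology_def by (simp add: istopology_root_open)

lemma topspace_root_topology: "topspace (root_topology X) = root_carrier X"
proof
  have "root_open X (root_carrier X)" unfolding root_open_def by simp
  then show "root_carrier X \<subseteq> topspace (root_topology X)"
    by (simp add: openin_subset openin_root_topology)
  show "topspace (root_topology X) \<subseteq> root_carrier X"
    unfolding topspace_def openin_root_topology root_open_def by blast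
qed

lemma closedin_root_topology:
  "closedin (root_topology X) U \<longleftrightarrow> U \<subseteq> root_carrier X \<and> (None \<in> U \<or> finite U)"
proof -
  have "root_carrier X - (root_carrier X - U) = U" if "U \<subseteq> root_carrier X"
    using that by blast
  moreover have "None \<in> root_carrier X" by (simp add: root_carrier_def)
  ultimately show ?thesis
    unfolding closedin_def openin_root_topology topspace_root_topology root_open_def by auto
qed

lemma clopenin_root_topology:
  "clopenin (root_topology X) U \<longleftrightarrow> U \<subseteq> root_carrier X \<and>
     (None \<notin> U \<and> finite U \<or> None \<in> U \<and> finite (root_carrier X - U))"
  unfolding clopenin_def openin_root_topology root_open_def closedin_root_topology by auto

lemma poset_on_root_carrier:
  assumes "poset_on X le"
  shows "poset_on (root_carrier X) (root_le le)"
proof -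
  have reflexive: "\<And>x. x \<in> X \<Longrightarrow> le x x"
    and antisymmetric: "\<And>x y. x \<in> X \<Longrightarrow> y \<in> X \<Longrightarrow> le x y \<Longrightarrow> le y x \<Longrightarrow> x = y"
    and transitive: "\<And>x y z. x \<in> X \<Longrightarrow> y \<in> X \<Longrightarrow> z \<in> X \<Longrightarrow> le x y \<Longrightarrow> le y z \<Longrightarrow> le x z"
    using assms unfolding poset_on_def by blast+
  have "root_le le x x" if "x \<in> root_carrier X" for x
    using that unfolding root_carrier_def by (auto intro: reflexive)
  moreover have "x = y"
    if "x \<in> root_carrier X" "y \<in> root_carrier X" "root_le le x y" "root_le le y x" for x y
    using that unfolding root_carrier_def by (cases x; cases y) (auto intro: antisymmetric)
  moreover have "root_le le x z"
    if "x \<in> root_carrier X" "y \<in> root_carrier X" "z \<in> root_carrier X"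
      "root_le le x y" "root_le le y z" for x y z
    using that unfolding root_carrier_def by (cases x; cases y; cases z) (auto intro: transitive)
  ultimately show ?thesis unfolding poset_on_def by blast
qed

lemma compact_space_root_topology: "compact_space (root_topology X)"
  unfolding compact_space_def compactin_def topspace_root_topology
proof (intro conjI allI impI)
  fix \<U> assume "(\<forall>U\<in>\<U>. openin (root_topology X) U) \<and> root_carrier X \<subseteq> \<Union>\<U>"
  then have opens: "\<And>U. U \<in> \<U> \<Longrightarrow> root_open X U" and cover: "root_carrier X \<subseteq> \<Union>\<U>"
    by (auto simp: openin_root_topology)
  obtain B where B: "B \<in> \<U>" "None \<in> B"
    using cover unfolding root_carrier_def by auto
  have finite_rest: "finite (root_carrier X - B)"
    using opens[OF B(1)] B(2) unfolding root_open_def by auto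
  have "\<forall>x\<in>root_carrier X - B. \<exists>C\<in>\<U>. x \<in> C" using cover by blast
  then obtain f where f: "\<forall>x\<in>root_carrier X - B. f x \<in> \<U> \<and> x \<in> f x"
    by (metis bchoice)
  show "\<exists>\<F>. finite \<F> \<and> \<F> \<subseteq> \<U> \<and> root_carrier X \<subseteq> \<Union>\<F>"
  proof (intro exI conjI)
    show "finite (insert B (f ` (root_carrier X - B)))" using finite_rest by simp
    show "insert B (f ` (root_carrier X - B)) \<subseteq> \<U>" using f B by blast
    show "root_carrier X \<subseteq> \<Union> (insert B (f ` (root_carrier X - B)))"
      using f by (auto intro: rev_bexI)
  qed
qed simp

lemma clopenin_down_set_root_topology:
  assumes po: "poset_on X le"
    and fin: "\<And>x. x \<in> X \<Longrightarrow> finite (X - {y \<in> X. le y x})"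
    and U: "clopenin (root_topology X) U"
  shows "clopenin (root_topology X) (down_set (root_carrier X) (root_le le) U)"
proof -
  let ?D = "down_set (root_carrier X) (root_le le) U"
  have U_sub: "U \<subseteq> root_carrier X" using U clopenin_root_topology by blast
  have D_sub: "?D \<subseteq> root_carrier X" unfolding down_set_def by blast
  have U_sub_D: "U \<subseteq> ?D"
    using U_sub poset_on_root_carrier[OF po] unfolding poset_on_def down_set_def by blast
  consider "U = {}" | "None \<in> U" | a where "Some a \<in> U"
    by (metis equals0I option.exhaust)
  then show ?thesis
  proof cases
    case 1
    then show ?thesis unfolding down_set_def clopenin_root_topology by simp
  next
    case 2
    then have "finite (root_carrier X - U)" using U clopenin_root_topology by blast
    then have "finite (root_carrier X - ?D)" by (rule finite_subset[rotated]) (use U_sub_D in blast)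
    then show ?thesis using 2 D_sub U_sub_D unfolding clopenin_root_topology by blast
  next
    case 3
    then have a: "a \<in> X" using U_sub unfolding root_carrier_def by blast
    have down_a: "insert None (Some ` {y \<in> X. le y a}) \<subseteq> ?D"
      using 3 unfolding down_set_def root_carrier_def by force
    have "root_carrier X - ?D \<subseteq> Some ` (X - {y \<in> X. le y a})"
      using down_a unfolding root_carrier_def by blast
    then have "finite (root_carrier X - ?D)" using fin[OF a] finite_subset by blast
    then show ?thesis using D_sub down_a unfolding clopenin_root_topology by blast
  qed
qed

lemma finite_principal_up_set:
  assumes "poset_on X le" "a \<in> X" "finite (X - {y \<in> X. le y a})"
  shows "finite {z \<in> X. le a z}"
proof -
  have "{z \<in> X. le a z} \<subseteq> insert a (X - {y \<in> X. le y a})"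
    using assms(1,2) unfolding poset_on_def by blast
  then show ?thesis using assms(3) by (simp add: finite_subset)
qed

lemma is_upset_root_principal:
  assumes "poset_on X le" "a \<in> X"
  shows "is_upset (root_carrier X) (root_le le) (Some ` {z \<in> X. le a z})"
proof -
  have transitive: "\<And>y z. y \<in> X \<Longrightarrow> z \<in> X \<Longrightarrow> le a y \<Longrightarrow> le y z \<Longrightarrow> le a z"
    using assms unfolding poset_on_def by blast
  show ?thesis
    unfolding is_upset_def root_carrier_def
    by (auto elim!: root_le.elims intro: transitive)
qed

lemma root_separation:
  assumes po: "poset_on X le"
    and fin: "\<And>x. x \<in> X \<Longrightarrow> finite (X - {y \<in> X. le y x})"
    and x: "x \<in> root_carrier X" and nle: "\<not> root_le le x y"
  shows "\<exists>U. clopenin (root_topology X) U \<and> is_upset (root_carrier X) (root_le le) U \<and>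
    x \<in> U \<and> y \<notin> U"
proof -
  obtain a where a: "x = Some a" "a \<in> X"
    using x nle unfolding root_carrier_def by auto
  let ?U = "Some ` {z \<in> X. le a z}"
  have "clopenin (root_topology X) ?U"
    using finite_principal_up_set[OF po a(2) fin[OF a(2)]]
    unfolding clopenin_root_topology root_carrier_def by auto
  moreover have "x \<in> ?U"
    using a po unfolding poset_on_def by blast
  moreover have "y \<notin> ?U"
    using a nle by auto
  ultimately show ?thesis using is_upset_root_principal[OF po a(2)] by blast
qed

theorem mainTheorem3:
  fixes X :: "'a set" and le :: "'a \<Rightarrow> 'a \<Rightarrow> bool"
  assumes "poset_on X le"
    and "\<And>x. x \<in> X \<Longrightarrow> finite (X - {y \<in> X. le y x})"
  shows "esakia_space (root_topology X) (root_le le)"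
  unfolding esakia_space_def topspace_root_topology
  using poset_on_root_carrier[OF assms(1)] compact_space_root_topology
    clopenin_down_set_root_topology[OF assms] root_separation[OF assms]
  by blast

end
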